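(* For any $s\in(0,1]$ there exists a $(\rho(s),\chi(s))$-bidding profile, where \[ \rho(s):=\frac{e^s}{s},\qquad \chi(s):=\begin{cases}(e^s-1)/s, & 0<s\le\ln 2,\\ \xi(s)/s, & \ln2\le s\le 1,\end{cases} \] and $\xi(s)$ is the unique solution $\xi\in[1,e]$ of $\xi(2-\ln\xi)=e^s$ for $s\in[\ln 2,1]$.
   Context: Given $1<\chi\le\rho$, a $(\rho,\chi)$-bidding profile is a non-decreasing, left-continuous function $G:\mathbb{R}\to(0,\infty)$ such that (offset) $G(x)<1$ for every $x<0$ and $G(x)\ge1$ for every $x>0$; (robustness) $\int_{-\infty}^{x+1}G(t)\,\mathrm{d} t\le\rho\,G(x)$ for every $x\in\mathbb{R}$; (consistency) $\int_{-\infty}^{1}G(t)\,\mathrm{d} t\le\chi$. *)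

theory Defs
  imports "HOL-Analysis.Analysis"
begin

text \<open>Improper integrals of the
positive function G over (-infinity, a] are taken as nonnegative Lebesgue integrals
(values in ennreal, possibly infinite), so each integral inequality also asserts finiteness.\<close>

definition bidding_profile :: "real \<Rightarrow> real \<Rightarrow> (real \<Rightarrow> real) \<Rightarrow> bool" where
  "bidding_profile rho chi G \<longleftrightarrow>
     1 < chi \<and> chi \<le> rho \<and>
     mono G \<and>
     (\<forall>x. continuous (at_left x) G) \<and>
     (\<forall>x. 0 < G x) \<and>
     (\<forall>x<0. G x < 1) \<and>
     (\<forall>x>0. 1 \<le> G x) \<and>
     (\<forall>x. (\<integral>\<^sup>+ t. ennreal (G t) * indicator {..x+1} t \<partial>lborel) \<le> ennreal (rho * G x)) \<and>
     (\<integral>\<^sup>+ t. ennreal (G t) * indicator {..1} t \<partial>lborel) \<le> ennreal chi"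

definition rho_s :: "real \<Rightarrow> real" where
  "rho_s s = exp s / s"

definition xi_s :: "real \<Rightarrow> real" where
  "xi_s s = (THE \<xi>. \<xi> \<in> {1..exp 1} \<and> \<xi> * (2 - ln \<xi>) = exp s)"

definition chi_s :: "real \<Rightarrow> real" where
  "chi_s s = (if s \<le> ln 2 then (exp s - 1) / s else xi_s s / s)"

end

theory Submission
  imports Defs
begin

text \<open>
  For \<open>x > 0\<close> the profile is \<open>G x = max 1 (exp (s (x - a)))\<close>, and for \<open>x \<le> 0\<close> it is
  \<open>G x = c \<Phi>(x + 1)\<close> with \<open>c = s exp (-s) = 1 / \<rho>\<close>, where \<open>\<Phi>\<close> is an antiderivative of \<open>G\<close>.
  Then robustness holds with equality for \<open>x \<le> 0\<close> and reduces to \<open>J + a \<le> 1 / s\<close> for \<open>x > 0\<close>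
  (where \<open>J = \<Phi>(0)\<close>), while consistency reads \<open>\<Phi>(1) \<le> \<chi>\<close>. On \<open>(-\<infinity>, 0]\<close>, \<open>\<Phi>\<close> solves the
  delay equation \<open>\<Phi>'(x) = c \<Phi>(x + 1)\<close> and is constructed backwards one unit interval at a
  time; the difficulty is to keep it positive. Because \<open>c = s exp (-s)\<close>, the quantity
  \<open>\<Phi>(x) - s \<integral>\<^sub>[\<^sub>x\<^sub>,\<^sub>x\<^sub>+\<^sub>1\<^sub>] exp (-s (v - x)) \<Phi>(v) dv\<close> gets multiplied by \<open>exp (-s)\<close> under a unit
  shift to the left. The choice of \<open>J\<close> makes it vanish at \<open>0\<close>, hence on all of \<open>(-\<infinity>, 0]\<close>,
  and its vanishing on an interval where \<open>\<Phi>\<close> increases forces \<open>\<Phi> > 0\<close> on the next interval to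
  the left. Finally \<open>a = 1\<close> if \<open>s \<le> ln 2\<close>, and \<open>exp (s (1 - a)) = \<xi>(s)\<close> otherwise.
\<close>

lemma nn_integral_atMost_le_antiderivative:
  fixes f g :: "real \<Rightarrow> real"
  assumes has_integral: "\<And>x y. x \<le> y \<Longrightarrow> (g has_integral f y - f x) {x..y}"
    and g_nonneg: "\<And>x. 0 \<le> g x" and f_nonneg: "\<And>x. 0 \<le> f x"
    and g_measurable: "g \<in> borel_measurable lborel"
  shows "(\<integral>\<^sup>+ t. ennreal (g t) * indicator {..y} t \<partial>lborel) \<le> ennreal (f y)"
proof -
  define h where "h n t = ennreal (g t) * indicator {-real n..y} t" for n :: nat and t
  have "incseq h"
    by (intro incseq_SucI le_funI mult_left_mono) (auto simp: h_def indicator_def)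
  have h_SUP: "ennreal (g t) * indicator {..y} t = (SUP n. h n t)" for t
  proof (rule antisym)
    obtain n :: nat where "-t \<le> real n" using real_arch_simple by blast
    then have "ennreal (g t) * indicator {..y} t = h n t" by (auto simp: h_def indicator_def)
    then show "ennreal (g t) * indicator {..y} t \<le> (SUP n. h n t)"
      using SUP_upper[of n UNIV "\<lambda>n. h n t"] by simp
    show "(SUP n. h n t) \<le> ennreal (g t) * indicator {..y} t"
      by (rule SUP_least) (auto simp: h_def indicator_def)
  qed
  have h_integral: "integral\<^sup>N lborel (h n) \<le> ennreal (f y)" for n
  proof (cases "-real n \<le> y")
    case True
    have "integral\<^sup>N lborel (h n) = ennreal (f y - f (-real n))"
      unfolding h_def by (rule nn_integral_has_integral_lebesgue'[OF g_nonneg has_integral[OF True]])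
    also have "\<dots> \<le> ennreal (f y)" using f_nonneg[of "-real n"] by (intro ennreal_leI) simp
    finally show ?thesis .
  next
    case False
    then have "h n = (\<lambda>_. 0)" by (auto simp: h_def fun_eq_iff)
    then show ?thesis by simp
  qed
  have "(\<integral>\<^sup>+ t. ennreal (g t) * indicator {..y} t \<partial>lborel) = (\<integral>\<^sup>+ t. (SUP n. h n t) \<partial>lborel)"
    by (simp add: h_SUP)
  also have "\<dots> = (SUP n. integral\<^sup>N lborel (h n))"
    using g_measurable unfolding h_def[abs_def]
    by (intro nn_integral_monotone_convergence_SUP[OF \<open>incseq h\<close>[unfolded h_def[abs_def]]]) simp
  also have "\<dots> \<le> ennreal (f y)" by (rule SUP_least) (rule h_integral)
  finally show ?thesis .
qed

lemma nonpos_in_unit_segment: "x \<le> 0 \<Longrightarrow> \<exists>k::nat. x \<in> {-(real k + 1)..-real k}"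
  by (intro exI[of _ "nat \<lfloor>-x\<rfloor>"]) (auto simp: of_nat_nat, linarith+)

lemma has_integral_id_on_unit: "((\<lambda>v::real. v) has_integral 1 / 2) {0..1}"
proof -
  have "((\<lambda>v::real. v) has_integral 1\<^sup>2 / 2 - 0\<^sup>2 / 2) {0..1}"
    by (intro fundamental_theorem_of_calculus)
       (auto intro!: derivative_eq_intros simp: has_real_derivative_iff_has_vector_derivative[symmetric])
  then show ?thesis by simp
qed

locale delay_extension =
  fixes s :: real and F :: "real \<Rightarrow> real"
  assumes s_pos: "0 < s"
    and F_continuous: "continuous_on {0..} F"
    and F_mono: "mono_on {0..} F"
    and F_0_pos: "0 < F 0"
    and F_balanced: "((\<lambda>v. exp (-s * v) * F v) has_integral F 0 / s) {0..1}"
begin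

definition c :: real where "c = s * exp (-s)"

text \<open>On \<open>[0, 1]\<close>, \<open>iter k\<close> is \<open>\<Phi>(\<cdot> - k)\<close> for the solution \<open>\<Phi>\<close> of \<open>\<Phi>' x = c \<Phi>(x + 1)\<close> (\<open>x < 0\<close>) with
  \<open>\<Phi> = F\<close> on \<open>[0, \<infinity>)\<close>; the constant of integration makes \<open>iter (Suc k) 1 = iter k 0\<close>.\<close>

primrec iter :: "nat \<Rightarrow> real \<Rightarrow> real" where
  "iter 0 = F"
| "iter (Suc k) = (\<lambda>u. iter k 0 + c * (integral {0..u} (iter k) - integral {0..1} (iter k)))"

declare iter.simps(2) [simp del]

lemma iter_Suc_eq:
  "iter (Suc k) u = iter k 0 + c * (integral {0..u} (iter k) - integral {0..1} (iter k))"
  by (simp add: iter.simps)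

lemma iter_Suc_1 [simp]: "iter (Suc k) 1 = iter k 0"
  by (simp add: iter_Suc_eq)

lemma c_pos: "0 < c"
  using s_pos by (simp add: c_def)

lemma iter_continuous: "continuous_on {0..1} (iter k)"
proof (induction k)
  case 0
  show ?case using F_continuous by (simp add: continuous_on_subset)
next
  case (Suc k)
  have "continuous_on {0..1} (\<lambda>u. integral {0..u} (iter k))"
    using integral_has_vector_derivative[OF Suc] continuous_on_vector_derivative by blast
  then show ?case by (auto simp: iter.simps intro!: continuous_intros)
qed

lemma iter_Suc_has_derivative:
  "u \<in> {0..1} \<Longrightarrow> (iter (Suc k) has_real_derivative c * iter k u) (at u within {0..1})"
  using integral_has_real_derivative[OF iter_continuous, of u k]
  by (auto simp: iter.simps intro!: derivative_eq_intros)

lemma iter_Suc_weighted_integral: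
  assumes "((\<lambda>v. exp (-s * v) * iter k v) has_integral I) {0..1}"
  shows "((\<lambda>v. exp (-s * v) * iter (Suc k) v) has_integral
           (iter (Suc k) 0 - exp (-s) * iter k 0 + c * I) / s) {0..1}"
proof -
  let ?w = "\<lambda>v. exp (-s * v) * iter (Suc k) v"
  have "?w integrable_on {0..1}"
    by (intro integrable_continuous_interval continuous_intros iter_continuous)
  then have w: "(?w has_integral integral {0..1} ?w) {0..1}" by blast
  have "(?w has_vector_derivative -s * ?w v + c * (exp (-s * v) * iter k v)) (at v within {0..1})"
    if "v \<in> {0..1}" for v
  proof -
    have "((\<lambda>v. exp (-s * v)) has_real_derivative -s * exp (-s * v)) (at v within {0..1})"
      by (auto intro!: derivative_eq_intros)
    from DERIV_mult[OF this iter_Suc_has_derivative[OF that, of k]]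
    show ?thesis
      unfolding has_real_derivative_iff_has_vector_derivative by (simp add: algebra_simps)
  qed
  then have "((\<lambda>v. -s * ?w v + c * (exp (-s * v) * iter k v)) has_integral ?w 1 - ?w 0) {0..1}"
    by (intro fundamental_theorem_of_calculus) auto
  moreover have "((\<lambda>v. -s * ?w v + c * (exp (-s * v) * iter k v)) has_integral
                   -s * integral {0..1} ?w + c * I) {0..1}"
    by (intro has_integral_add has_integral_mult_right w assms)
  ultimately have "-s * integral {0..1} ?w + c * I = ?w 1 - ?w 0"
    by (rule has_integral_unique[rotated])
  then have "integral {0..1} ?w = (iter (Suc k) 0 - exp (-s) * iter k 0 + c * I) / s"
    using s_pos by (simp add: field_simps)
  with w show ?thesis by simp
qed

text \<open>That is, \<open>\<Phi>(x) - s \<integral>\<^sub>[\<^sub>x\<^sub>,\<^sub>x\<^sub>+\<^sub>1\<^sub>] exp (-s (v - x)) \<Phi>(v) dv\<close> vanishes at \<open>x = -k\<close>.\<close>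

lemma iter_balanced: "((\<lambda>v. exp (-s * v) * iter k v) has_integral iter k 0 / s) {0..1}"
proof (induction k)
  case 0
  show ?case using F_balanced by simp
next
  case (Suc k)
  have "c * (iter k 0 / s) = exp (-s) * iter k 0"
    using s_pos by (simp add: c_def)
  with iter_Suc_weighted_integral[OF Suc] show ?case by simp
qed

lemma iter_Suc_mono:
  assumes "0 < iter k 0" and mono: "mono_on {0..1} (iter k)"
  shows "mono_on {0..1} (iter (Suc k))"
proof (rule mono_onI)
  fix u v :: real assume uv: "u \<in> {0..1}" "v \<in> {0..1}" "u \<le> v"
  have integrable: "iter k integrable_on {0..v}"
    using uv by (intro integrable_continuous_interval continuous_on_subset[OF iter_continuous]) auto
  have "integral {0..u} (iter k) + integral {u..v} (iter k) = integral {0..v} (iter k)"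
    using uv integrable by (intro Henstock_Kurzweil_Integration.integral_combine) auto
  moreover have "0 \<le> integral {u..v} (iter k)"
  proof (rule integral_nonneg)
    show "iter k integrable_on {u..v}"
      using uv by (intro integrable_on_subinterval[OF integrable]) auto
    show "0 \<le> iter k x" if "x \<in> {u..v}" for x
      using assms(1) mono_onD[OF mono, of 0 x] that uv by auto
  qed
  ultimately show "iter (Suc k) u \<le> iter (Suc k) v"
    using c_pos by (simp add: iter_Suc_eq)
qed

lemma has_integral_exp_minus_on_unit: "((\<lambda>v. exp (-s * v)) has_integral (1 - exp (-s)) / s) {0..1}"
proof -
  have "((\<lambda>v. exp (-s * v)) has_integral (- exp (-s * 1) / s) - (- exp (-s * 0) / s)) {0..1}"
    using s_pos
    by (intro fundamental_theorem_of_calculus)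
       (auto intro!: derivative_eq_intros simp: has_real_derivative_iff_has_vector_derivative[symmetric])
  then show ?thesis by (simp add: diff_divide_distrib)
qed

text \<open>Since \<open>iter (Suc k) v \<ge> m + d v\<close> with \<open>m = iter (Suc k) 0\<close> and \<open>d = c iter k 0 > 0\<close>, the
  balance identity \<open>m / s = \<integral>\<^sub>[\<^sub>0\<^sub>,\<^sub>1\<^sub>] exp (-s v) iter (Suc k) v dv\<close> gives \<open>m \<ge> s d / 2\<close>.\<close>

lemma iter_Suc_0_pos:
  assumes "0 < iter k 0" and mono: "mono_on {0..1} (iter k)"
  shows "0 < iter (Suc k) 0"
proof -
  define m where "m = iter (Suc k) 0"
  define d where "d = c * iter k 0"
  have "0 < d" using c_pos assms(1) by (simp add: d_def)
  have linear_bound: "m + d * v \<le> iter (Suc k) v" if "v \<in> {0..1}" for v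
  proof -
    have "integral {0..v} (\<lambda>_. iter k 0) \<le> integral {0..v} (iter k)"
      using that by (intro integral_le integrable_continuous_interval
          continuous_on_subset[OF iter_continuous] mono_onD[OF mono]) auto
    then have "c * (v * iter k 0) \<le> c * integral {0..v} (iter k)"
      using that c_pos by (intro mult_left_mono) auto
    then show ?thesis by (simp add: m_def d_def iter_Suc_eq algebra_simps)
  qed
  have lower: "m * exp (-s * v) + exp (-s) * d * v \<le> exp (-s * v) * iter (Suc k) v"
    if "v \<in> {0..1}" for v
  proof -
    have "exp (-s) \<le> exp (-s * v)" using that s_pos by (simp add: mult_left_le)
    then have "exp (-s) * d * v \<le> exp (-s * v) * d * v"
      using that \<open>0 < d\<close> by (intro mult_right_mono) auto
    moreover have "exp (-s * v) * (m + d * v) \<le> exp (-s * v) * iter (Suc k) v"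
      using linear_bound[OF that] by (intro mult_left_mono) auto
    ultimately show ?thesis by (simp add: algebra_simps)
  qed
  have "((\<lambda>v. m * exp (-s * v) + exp (-s) * d * v) has_integral
          m * ((1 - exp (-s)) / s) + exp (-s) * d * (1 / 2)) {0..1}"
    by (intro has_integral_add has_integral_mult_right
        has_integral_exp_minus_on_unit has_integral_id_on_unit)
  from has_integral_le[OF this iter_balanced lower]
  have "m * ((1 - exp (-s)) / s) + exp (-s) * d / 2 \<le> m / s"
    by (simp add: m_def)
  then have "exp (-s) * (s * d / 2) \<le> exp (-s) * m"
    using s_pos by (simp add: field_simps)
  moreover have "0 < s * d / 2" using s_pos \<open>0 < d\<close> by simp
  ultimately show ?thesis unfolding m_def by simp
qed

lemma iter_0_pos_and_mono: "0 < iter k 0 \<and> mono_on {0..1} (iter k)"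
proof (induction k)
  case 0
  show ?case using F_0_pos mono_on_subset[OF F_mono] by auto
next
  case (Suc k)
  then show ?case using iter_Suc_0_pos iter_Suc_mono by blast
qed

lemma iter_pos: "u \<in> {0..1} \<Longrightarrow> 0 < iter k u"
  using iter_0_pos_and_mono[of k] mono_onD[of "{0..1}" "iter k" 0 u] by fastforce

definition Phi :: "real \<Rightarrow> real" where
  "Phi x = (if 0 \<le> x then F x else iter (nat \<lceil>-x\<rceil>) (x + real (nat \<lceil>-x\<rceil>)))"

lemma Phi_nonneg_eq: "0 \<le> x \<Longrightarrow> Phi x = F x"
  by (simp add: Phi_def)

lemma Phi_on_segment:
  assumes "x \<in> {-(real k + 1)..-real k}"
  shows "Phi x = iter (Suc k) (x + real k + 1)"
proof (cases "x = -real k")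
  case True
  then show ?thesis by (cases k) (simp_all add: Phi_def nat_add_distrib)
next
  case False
  then have "\<lceil>-x\<rceil> = int k + 1" using assms by (intro ceiling_unique) auto
  then show ?thesis using False assms by (simp add: Phi_def nat_add_distrib algebra_simps)
qed

lemma Phi_shift_on_segment:
  assumes "x \<in> {-(real k + 1)..-real k}"
  shows "Phi (x + 1) = iter k (x + real k + 1)"
proof (cases k)
  case 0
  then show ?thesis using assms by (simp add: Phi_nonneg_eq)
next
  case (Suc j)
  then have "x + 1 \<in> {-(real j + 1)..-real j}" using assms by auto
  from Phi_on_segment[OF this] show ?thesis using Suc by (simp add: algebra_simps)
qed

lemma Phi_pos: "0 < Phi x"
proof (cases "0 \<le> x")
  case True
  then have "F 0 \<le> F x" using mono_onD[OF F_mono] by auto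
  then show ?thesis using True F_0_pos by (simp add: Phi_nonneg_eq)
next
  case False
  then obtain k where k: "x \<in> {-(real k + 1)..-real k}" using nonpos_in_unit_segment by force
  then show ?thesis by (auto simp: Phi_on_segment intro: iter_pos)
qed

lemma Phi_continuous_on_segment: "continuous_on {-(real k + 1)..-real k} Phi"
proof -
  have "continuous_on {-(real k + 1)..-real k} (\<lambda>x. iter (Suc k) (x + real k + 1))"
    by (rule continuous_on_compose2[OF iter_continuous]) (auto intro!: continuous_intros)
  then show ?thesis by (rule continuous_on_eq) (simp add: Phi_on_segment)
qed

lemma Phi_continuous_on_ray: "continuous_on {-real n..} Phi"
proof (induction n)
  case 0
  have "continuous_on {0..} Phi"
    by (rule continuous_on_eq[OF F_continuous]) (simp add: Phi_nonneg_eq)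
  then show ?case by simp
next
  case (Suc n)
  have "continuous_on ({-(real n + 1)..-real n} \<union> {-real n..}) Phi"
    by (intro continuous_on_closed_Un Phi_continuous_on_segment Suc) auto
  moreover have "{-(real n + 1)..-real n} \<union> {-real n..} = {-real (Suc n)..}" by auto
  ultimately show ?case by simp
qed

lemma isCont_Phi: "isCont Phi x"
proof -
  obtain n :: nat where "-x < real n" using reals_Archimedean2 by blast
  then have "x \<in> interior {-real n..}" by simp
  then show ?thesis by (rule continuous_on_interior[OF Phi_continuous_on_ray])
qed

lemma Phi_has_derivative_neg:
  assumes "x < 0" and "x \<notin> \<int>"
  shows "(Phi has_real_derivative c * Phi (x + 1)) (at x)"
proof -
  obtain k where k: "x \<in> {-(real k + 1)..-real k}" using nonpos_in_unit_segment assms(1) by force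
  moreover have "x \<noteq> -(real k + 1)" "x \<noteq> -real k" using assms(2) by (auto simp del: of_nat_Suc)
  ultimately have x: "x \<in> {-(real k + 1)<..<-real k}" by auto
  define u where "u = x + (real k + 1)"
  then have u: "u \<in> interior {0..1}" using x by simp
  then have "u \<in> {0..1}" using interior_subset by blast
  moreover have "at u within {0..1} = at u" by (rule at_within_interior[OF u])
  ultimately have "(iter (Suc k) has_real_derivative c * iter k u) (at (x + (real k + 1)))"
    using iter_Suc_has_derivative[of u k] by (simp add: u_def)
  then have "((\<lambda>z. iter (Suc k) (z + real k + 1)) has_real_derivative c * iter k u) (at x)"
    unfolding DERIV_shift by (simp add: add.assoc)
  then have "(Phi has_real_derivative c * iter k u) (at x)"
    by (rule has_field_derivative_transform_within_open[OF _ _ x])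
       (auto simp: Phi_on_segment[symmetric])
  then show ?thesis using Phi_shift_on_segment[OF k] by (simp add: u_def add.assoc)
qed

end

text \<open>The profile for \<open>x > 0\<close> is \<open>max 1 (exp (s (x - a)))\<close>, with antiderivative \<open>J + H\<close>;
  \<open>J_eq\<close> is the balance condition of \<^locale>\<open>delay_extension\<close> for \<open>F = J + H\<close>.\<close>

locale two_phase =
  fixes s a J :: real
  assumes s_pos: "0 < s" and a_nonneg: "0 \<le> a" and a_le_1: "a \<le> 1" and J_pos: "0 < J"
    and J_eq: "J = exp s / s - 2 * exp (s * (1 - a)) / s - a + 1 / s + exp (s * (1 - a)) * (1 - a)"
    and J_le: "J + a \<le> 1 / s"
begin

definition H :: "real \<Rightarrow> real" where
  "H x = min x a + (exp (s * max 0 (x - a)) - 1) / s"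

lemma H_below: "x \<le> a \<Longrightarrow> H x = x"
  by (simp add: H_def)

lemma H_above: "a \<le> x \<Longrightarrow> H x = a + (exp (s * (x - a)) - 1) / s"
  by (simp add: H_def)

lemma H_continuous: "continuous_on S H"
  unfolding H_def[abs_def] using s_pos by (intro continuous_intros) auto

lemma H_mono: "mono H"
proof (rule monoI)
  fix x y :: real assume "x \<le> y"
  then have "exp (s * max 0 (x - a)) \<le> exp (s * max 0 (y - a))"
    using s_pos by (simp add: mult_left_mono)
  with \<open>x \<le> y\<close> show "H x \<le> H y"
    unfolding H_def using s_pos by (intro add_mono min.mono divide_right_mono) auto
qed

lemma H_1_ge_1: "1 \<le> H 1"
proof -
  have "s * (1 - a) \<le> exp (s * (1 - a)) - 1" using exp_ge_add_one_self[of "s * (1 - a)"] by linarith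
  then have "1 - a \<le> (exp (s * (1 - a)) - 1) / s" using s_pos by (simp add: field_simps)
  then show ?thesis using a_le_1 by (simp add: H_above)
qed

lemma H_less_H_1: "x < 1 \<Longrightarrow> H x < H 1"
proof (cases "x \<le> a")
  case True
  then show "x < 1 \<Longrightarrow> H x < H 1" using H_1_ge_1 by (simp add: H_below)
next
  case False
  then show "x < 1 \<Longrightarrow> H x < H 1"
    using s_pos a_le_1 by (simp add: H_above divide_strict_right_mono)
qed

lemma weighted_integral_J_plus_H:
  "((\<lambda>v. exp (-s * v) * (J + H v)) has_integral (J + H 0) / s) {0..1}"
proof -
  define E where "E = exp (-s * a)"
  define P where "P v = - exp (-s * v) * (J + v) / s - exp (-s * v) / s\<^sup>2" for v
  define Q where "Q v = - exp (-s * v) * (J + a - 1 / s) / s + v * E / s" for v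
  have "(P has_vector_derivative exp (-s * v) * (J + H v)) (at v within {0..a})"
    if "v \<in> {0..a}" for v
  proof -
    have "(P has_real_derivative exp (-s * v) * (J + v)) (at v within {0..a})"
      unfolding P_def[abs_def] using s_pos
      by (auto intro!: derivative_eq_intros simp: field_simps power2_eq_square)
    then show ?thesis
      using that by (simp add: H_below has_real_derivative_iff_has_vector_derivative)
  qed
  then have "((\<lambda>v. exp (-s * v) * (J + H v)) has_integral P a - P 0) {0..a}"
    using a_nonneg by (intro fundamental_theorem_of_calculus) auto
  moreover have "(Q has_vector_derivative exp (-s * v) * (J + H v)) (at v within {a..1})"
    if "v \<in> {a..1}" for v
  proof -
    have "exp (-s * v) * exp (s * (v - a)) = E"
      by (simp add: E_def algebra_simps flip: exp_add)
    then have "exp (-s * v) * (J + H v) = exp (-s * v) * (J + a - 1 / s) + E / s"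
      using that s_pos by (simp add: H_above field_simps)
    moreover have "(Q has_real_derivative exp (-s * v) * (J + a - 1 / s) + E / s) (at v within {a..1})"
      unfolding Q_def[abs_def] using s_pos by (auto intro!: derivative_eq_intros simp: field_simps)
    ultimately show ?thesis by (simp add: has_real_derivative_iff_has_vector_derivative)
  qed
  then have "((\<lambda>v. exp (-s * v) * (J + H v)) has_integral Q 1 - Q a) {a..1}"
    using a_le_1 by (intro fundamental_theorem_of_calculus) auto
  ultimately have "((\<lambda>v. exp (-s * v) * (J + H v)) has_integral P a - P 0 + (Q 1 - Q a)) {0..1}"
    using a_nonneg a_le_1 by (intro has_integral_combine)
  moreover have "exp s * (1 - 2 * E - s * exp (-s) * (J + a - 1 / s) + s * E * (1 - a)) = 0"
  proof -
    have "exp s * E = exp (s * (1 - a))" "exp s * exp (-s) = 1"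
      by (simp_all add: E_def algebra_simps flip: exp_add)
    moreover have "exp s * (1 - 2 * E - s * exp (-s) * (J + a - 1 / s) + s * E * (1 - a))
        = exp s - 2 * (exp s * E) - s * (exp s * exp (-s)) * (J + a - 1 / s)
          + s * (exp s * E) * (1 - a)"
      by (simp add: algebra_simps)
    ultimately have "exp s * (1 - 2 * E - s * exp (-s) * (J + a - 1 / s) + s * E * (1 - a))
        = exp s - 2 * exp (s * (1 - a)) - s * (J + a - 1 / s) + s * exp (s * (1 - a)) * (1 - a)"
      by simp
    also have "\<dots> = 0"
      using s_pos by (subst J_eq) (simp add: field_simps)
    finally show ?thesis .
  qed
  then have numerator: "1 - 2 * E - s * exp (-s) * (J + a - 1 / s) + s * E * (1 - a) = 0" by simp
  have PQ: "P a = - E * (J + a) / s - E / s\<^sup>2" "P 0 = - J / s - 1 / s\<^sup>2"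
    "Q 1 = - exp (-s) * (J + a - 1 / s) / s + E / s" "Q a = - E * (J + a - 1 / s) / s + a * E / s"
    by (simp_all add: P_def Q_def E_def)
  have "P a - P 0 + (Q 1 - Q a)
      = J / s + (1 - 2 * E - s * exp (-s) * (J + a - 1 / s) + s * E * (1 - a)) / s\<^sup>2"
    unfolding PQ using s_pos by (simp add: field_simps power2_eq_square)
  then have "P a - P 0 + (Q 1 - Q a) = (J + H 0) / s"
    using a_nonneg by (simp add: numerator H_below)
  ultimately show ?thesis by simp
qed

sublocale delay_extension s "\<lambda>x. J + H x"
proof
  show "0 < s" by (rule s_pos)
  show "continuous_on {0..} (\<lambda>x. J + H x)" by (intro continuous_intros H_continuous)
  show "mono_on {0..} (\<lambda>x. J + H x)" by (intro mono_onI add_left_mono monoD[OF H_mono])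
  show "0 < J + H 0" using J_pos a_nonneg by (simp add: H_below)
  show "((\<lambda>v. exp (-s * v) * (J + H v)) has_integral (J + H 0) / s) {0..1}"
    by (rule weighted_integral_J_plus_H)
qed

definition G :: "real \<Rightarrow> real" where
  "G x = (if x \<le> 0 then c * Phi (x + 1) else max 1 (exp (s * (x - a))))"

lemma Phi_eq_J_plus_H: "0 \<le> x \<Longrightarrow> Phi x = J + H x"
  by (simp add: Phi_nonneg_eq)

lemma Phi_1: "Phi 1 = J + a + (exp (s * (1 - a)) - 1) / s"
  using a_le_1 by (simp add: Phi_eq_J_plus_H H_above)

lemma Phi_has_derivative_G:
  assumes "x \<notin> \<int>" and "x \<noteq> a"
  shows "(Phi has_real_derivative G x) (at x)"
proof (cases "x < 0")
  case True
  then show ?thesis using Phi_has_derivative_neg[OF True assms(1)] by (simp add: G_def)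
next
  case False
  then have "0 < x" using assms(1) by (cases "x = 0") auto
  show ?thesis
  proof (cases "x < a")
    case True
    have "((\<lambda>z. J + z) has_real_derivative 1) (at x)" by (auto intro!: derivative_eq_intros)
    then have "(Phi has_real_derivative 1) (at x)"
      by (rule has_field_derivative_transform_within_open[of _ _ _ "{0<..<a}"])
         (use \<open>0 < x\<close> True in \<open>auto simp: Phi_eq_J_plus_H H_below\<close>)
    moreover have "G x = 1"
    proof -
      have "s * (x - a) < 0" using True s_pos by (simp add: mult_pos_neg)
      then show ?thesis using \<open>0 < x\<close> by (simp add: G_def max_def)
    qed
    ultimately show ?thesis by simp
  next
    case False
    then have "a < x" using assms(2) by simp
    have "((\<lambda>z. J + (a + (exp (s * (z - a)) - 1) / s)) has_real_derivative exp (s * (x - a))) (at x)"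
      using s_pos by (auto intro!: derivative_eq_intros)
    then have "(Phi has_real_derivative exp (s * (x - a))) (at x)"
      by (rule has_field_derivative_transform_within_open[of _ _ _ "{a<..}"])
         (use \<open>a < x\<close> a_nonneg in \<open>auto simp: Phi_eq_J_plus_H H_above\<close>)
    moreover have "G x = exp (s * (x - a))" using \<open>a < x\<close> \<open>0 < x\<close> s_pos by (simp add: G_def max_def)
    ultimately show ?thesis by simp
  qed
qed

lemma G_has_integral: "x \<le> y \<Longrightarrow> (G has_integral Phi y - Phi x) {x..y}"
  using Phi_has_derivative_G
  by (intro fundamental_theorem_of_calculus_interior_strong[of "{z \<in> \<int>. x \<le> z \<and> z \<le> y} \<union> {a}"]
        continuous_at_imp_continuous_on isCont_Phi ballI)
     (auto simp: finite_int_segment has_real_derivative_iff_has_vector_derivative)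

lemma G_pos: "0 < G x"
  using Phi_pos[of "x + 1"] c_pos by (auto simp: G_def)

lemma Phi_mono: "mono Phi"
  using has_integral_nonneg[OF G_has_integral] G_pos by (intro monoI) (simp add: less_imp_le)

lemma rho_times_c: "exp s / s * c = 1"
  using s_pos by (simp add: c_def exp_minus field_simps)

lemma Phi_1_le_rho: "Phi 1 \<le> exp s / s"
proof -
  have "Phi 1 \<le> 1 / s + (exp (s * (1 - a)) - 1) / s" using J_le by (simp add: Phi_1)
  also have "\<dots> = exp (s * (1 - a)) / s" using s_pos by (simp add: field_simps)
  also have "\<dots> \<le> exp s / s" using s_pos a_nonneg by (intro divide_right_mono) (auto simp: mult_left_le)
  finally show ?thesis .
qed

lemma Phi_succ_le_rho_G: "Phi (x + 1) \<le> exp s / s * G x"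
proof (cases "x \<le> 0")
  case True
  then have "exp s / s * G x = (exp s / s * c) * Phi (x + 1)" by (simp add: G_def)
  then show ?thesis unfolding rho_times_c by simp
next
  case False
  have "Phi (x + 1) \<le> 1 / s + (exp (s * (x + 1 - a)) - 1) / s"
    using False a_le_1 J_le by (simp add: Phi_eq_J_plus_H H_above)
  also have "\<dots> = exp s / s * exp (s * (x - a))"
  proof -
    have "exp (s * (x + 1 - a)) = exp s * exp (s * (x - a))"
      by (simp add: algebra_simps flip: exp_add)
    then show ?thesis using s_pos by (simp add: field_simps)
  qed
  also have "\<dots> \<le> exp s / s * G x"
    using False s_pos by (intro mult_left_mono) (auto simp: G_def)
  finally show ?thesis .
qed

lemma c_times_Phi_le_1: "Phi x \<le> Phi 1 \<Longrightarrow> c * Phi x \<le> 1"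
proof -
  assume "Phi x \<le> Phi 1"
  then have "c * Phi x \<le> c * (exp s / s)"
    using Phi_1_le_rho c_pos by (intro mult_left_mono) auto
  then show ?thesis using rho_times_c by (simp add: mult.commute)
qed

lemma c_times_Phi_less_1: "Phi x < Phi 1 \<Longrightarrow> c * Phi x < 1"
proof -
  assume "Phi x < Phi 1"
  then have "c * Phi x < c * (exp s / s)"
    using Phi_1_le_rho c_pos by (intro mult_strict_left_mono) auto
  then show ?thesis using rho_times_c by (simp add: mult.commute)
qed

lemma G_less_1: "x < 0 \<Longrightarrow> G x < 1"
proof -
  assume "x < 0"
  have "Phi (x + 1) < Phi 1"
  proof (cases "0 < x + 1")
    case True
    then show ?thesis using H_less_H_1[of "x + 1"] \<open>x < 0\<close> by (simp add: Phi_eq_J_plus_H)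
  next
    case False
    then have "Phi (x + 1) \<le> Phi 0" by (intro monoD[OF Phi_mono]) simp
    also have "\<dots> < Phi 1" using H_less_H_1[of 0] by (simp add: Phi_eq_J_plus_H)
    finally show ?thesis .
  qed
  then show ?thesis using \<open>x < 0\<close> c_times_Phi_less_1 by (simp add: G_def)
qed

lemma G_mono: "mono G"
proof (rule monoI)
  fix x y :: real assume "x \<le> y"
  show "G x \<le> G y"
  proof (cases "y \<le> 0")
    case True
    then show ?thesis
      using \<open>x \<le> y\<close> monoD[OF Phi_mono, of "x + 1" "y + 1"] c_pos by (simp add: G_def)
  next
    case False
    then have "1 \<le> G y" by (simp add: G_def)
    show ?thesis
    proof (cases "x \<le> 0")
      case True
      then have "G x \<le> 1"
        using monoD[OF Phi_mono, of "x + 1" 1] by (simp add: G_def c_times_Phi_le_1)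
      with \<open>1 \<le> G y\<close> show ?thesis by linarith
    next
      case False
      then have G_eqs: "G x = max 1 (exp (s * (x - a)))" "G y = max 1 (exp (s * (y - a)))"
        using \<open>x \<le> y\<close> by (simp_all add: G_def)
      have "exp (s * (x - a)) \<le> exp (s * (y - a))"
        using \<open>x \<le> y\<close> s_pos by (simp add: mult_left_mono)
      then show ?thesis unfolding G_eqs by (rule max.mono[OF order_refl])
    qed
  qed
qed

lemma G_left_continuous: "continuous (at_left x) G"
proof (cases "x \<le> 0")
  case True
  have "isCont (\<lambda>z. c * Phi (z + 1)) x"
    by (intro continuous_intros isCont_o2[OF _ isCont_Phi])
  then have "((\<lambda>z. c * Phi (z + 1)) \<longlongrightarrow> G x) (at_left x)"
    using True by (simp add: isCont_def filterlim_at_split G_def)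
  moreover have "\<forall>\<^sub>F z in at_left x. c * Phi (z + 1) = G z"
    using True by (auto simp: eventually_at_filter G_def)
  ultimately have "(G \<longlongrightarrow> G x) (at_left x)" by (rule Lim_transform_eventually)
  then show ?thesis by (simp add: continuous_within)
next
  case False
  have "\<forall>\<^sub>F z in nhds x. max 1 (exp (s * (z - a))) = G z"
    using False eventually_nhds_in_open[of "{0<..}" x] by (auto simp: G_def elim!: eventually_mono)
  moreover have "isCont (\<lambda>z. max 1 (exp (s * (z - a)))) x" by (intro continuous_intros)
  ultimately have "isCont G x" by (subst (asm) isCont_cong)
  then show ?thesis by (rule continuous_at_imp_continuous_within)
qed

lemma bidding_profile_G: "bidding_profile (exp s / s) (J + a + (exp (s * (1 - a)) - 1) / s) G"
  unfolding bidding_profile_def Phi_1[symmetric]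
proof (intro conjI allI impI)
  show "1 < Phi 1" using J_pos H_1_ge_1 by (simp add: Phi_eq_J_plus_H)
  show "Phi 1 \<le> exp s / s" by (rule Phi_1_le_rho)
  have integral_le_Phi: "(\<integral>\<^sup>+ t. ennreal (G t) * indicator {..y} t \<partial>lborel) \<le> ennreal (Phi y)" for y
    using G_has_integral G_pos Phi_pos borel_measurable_mono[OF G_mono]
    by (intro nn_integral_atMost_le_antiderivative) (auto intro: less_imp_le)
  show "(\<integral>\<^sup>+ t. ennreal (G t) * indicator {..x + 1} t \<partial>lborel) \<le> ennreal (exp s / s * G x)" for x
    using integral_le_Phi[of "x + 1"] ennreal_leI[OF Phi_succ_le_rho_G[of x]] by (rule order_trans)
  show "(\<integral>\<^sup>+ t. ennreal (G t) * indicator {..1} t \<partial>lborel) \<le> ennreal (Phi 1)"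
    by (rule integral_le_Phi)
qed (use G_mono G_left_continuous G_pos G_less_1 in \<open>auto simp: G_def\<close>)

end

lemma xi_equation_ex1:
  fixes s :: real
  assumes "ln 2 \<le> s" and "s \<le> 1"
  shows "\<exists>!\<xi>. \<xi> \<in> {1..exp 1} \<and> \<xi> * (2 - ln \<xi>) = exp s"
proof -
  define f where "f \<xi> = \<xi> * (2 - ln \<xi>)" for \<xi> :: real
  have f_continuous: "continuous_on {1..exp 1} f"
    unfolding f_def by (intro continuous_intros) auto
  have "f 1 \<le> exp s"
    using exp_le_cancel_iff[of "ln 2" s] assms(1) by (simp add: f_def)
  moreover have "exp s \<le> f (exp 1)"
    using assms(2) by (simp add: f_def)
  ultimately obtain \<xi> where \<xi>: "\<xi> \<in> {1..exp 1}" "f \<xi> = exp s"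
    using IVT'[of f 1 "exp s" "exp 1", OF _ _ _ f_continuous] by auto
  have "strict_mono_on {1..exp 1} f"
  proof (rule strict_mono_onI)
    fix u v :: real assume "u \<in> {1..exp 1}" "v \<in> {1..exp 1}" "u < v"
    show "f u < f v"
    proof (rule DERIV_pos_imp_increasing_open[OF \<open>u < v\<close>])
      fix z assume "u < z" "z < v"
      then have "0 < z" "ln z < 1"
        using \<open>u \<in> {1..exp 1}\<close> \<open>v \<in> {1..exp 1}\<close> ln_less_cancel_iff[of z "exp 1"] by auto
      moreover have "(f has_real_derivative 1 - ln z) (at z)"
        unfolding f_def[abs_def] using \<open>0 < z\<close> by (auto intro!: derivative_eq_intros)
      ultimately show "\<exists>y. (f has_real_derivative y) (at z) \<and> 0 < y" by auto
    next
      show "continuous_on {u..v} f"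
        using \<open>u \<in> {1..exp 1}\<close> \<open>v \<in> {1..exp 1}\<close> by (auto intro: continuous_on_subset[OF f_continuous])
    qed
  qed
  then have "inj_on f {1..exp 1}" by (rule strict_mono_on_imp_inj_on)
  then show ?thesis
    using \<xi> by (intro ex1I[of _ \<xi>]) (auto simp: f_def[symmetric] inj_on_def)
qed

lemma xi_s_solves:
  assumes "ln 2 \<le> s" and "s \<le> 1"
  shows "xi_s s \<in> {1..exp 1}" and "xi_s s * (2 - ln (xi_s s)) = exp s"
  using theI'[OF xi_equation_ex1[OF assms]] unfolding xi_s_def by auto

lemma bidding_profile_small_s:
  assumes "0 < s" and "s \<le> ln 2"
  shows "\<exists>G. bidding_profile (rho_s s) (chi_s s) G"
proof -
  define J where "J = (exp s - 1 - s) / s"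
  have "0 < s\<^sup>2 / 2" using assms(1) by simp
  then have "1 + s < exp s" using exp_lower_Taylor_quadratic[of s] assms(1) by linarith
  then have "0 < J" using assms(1) by (simp add: J_def)
  have "exp s \<le> 2" using assms(2) by (metis exp_le_cancel_iff exp_ln zero_less_numeral)
  then interpret two_phase s 1 J
    using assms(1) \<open>0 < J\<close> by unfold_locales (auto simp: J_def field_simps)
  have "chi_s s = J + 1 + (exp (s * (1 - 1)) - 1) / s"
    using assms by (simp add: chi_s_def J_def field_simps)
  then show ?thesis using bidding_profile_G by (auto simp: rho_s_def)
qed

lemma bidding_profile_large_s:
  assumes "ln 2 < s" and "s \<le> 1"
  shows "\<exists>G. bidding_profile (rho_s s) (chi_s s) G"
proof -
  define \<xi> where "\<xi> = xi_s s"
  have \<xi>: "\<xi> \<in> {1..exp 1}" "\<xi> * (2 - ln \<xi>) = exp s"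
    using xi_s_solves assms unfolding \<xi>_def by auto
  have "0 < s" using assms(1) ln_gt_zero[of 2] by linarith
  have "ln \<xi> \<le> 1" using \<xi>(1) ln_le_cancel_iff[of \<xi> "exp 1"] by simp
  then have "\<xi> \<le> exp s" using \<xi> mult_left_mono[of 1 "2 - ln \<xi>" \<xi>] by simp
  then have "ln \<xi> \<le> s" using \<xi>(1) ln_le_cancel_iff[of \<xi> "exp s"] by simp
  have "2 < exp s" using exp_less_cancel_iff[of "ln 2" s] assms(1) by simp
  then have "\<xi> \<noteq> 1" using \<xi>(2) by auto
  then have "0 < ln \<xi>" using \<xi>(1) by simp
  define a where "a = 1 - ln \<xi> / s"
  define J where "J = 1 / s - a"
  have "exp (s * (1 - a)) = \<xi>" using \<open>0 < s\<close> \<xi>(1) by (simp add: a_def)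
  interpret two_phase s a J
  proof
    show "0 < s" "0 \<le> a" "a \<le> 1" "0 < J" "J + a \<le> 1 / s"
      using \<open>0 < s\<close> \<open>ln \<xi> \<le> s\<close> \<open>0 < ln \<xi>\<close> \<open>s \<le> 1\<close> by (auto simp: a_def J_def field_simps)
    show "J = exp s / s - 2 * exp (s * (1 - a)) / s - a + 1 / s + exp (s * (1 - a)) * (1 - a)"
      using \<open>0 < s\<close> \<xi>(2) unfolding \<open>exp (s * (1 - a)) = \<xi>\<close> by (simp add: J_def a_def field_simps)
  qed
  have "chi_s s = J + a + (exp (s * (1 - a)) - 1) / s"
    using assms(1) \<open>0 < s\<close> unfolding \<open>exp (s * (1 - a)) = \<xi>\<close>
    by (simp add: chi_s_def \<xi>_def J_def field_simps)
  then show ?thesis using bidding_profile_G by (auto simp: rho_s_def)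
qed

theorem theorem2:
  fixes s :: real
  assumes "0 < s" and "s \<le> 1"
  shows "(ln 2 \<le> s \<longrightarrow> (\<exists>!\<xi>. \<xi> \<in> {1..exp 1} \<and> \<xi> * (2 - ln \<xi>) = exp s))
         \<and> (\<exists>G. bidding_profile (rho_s s) (chi_s s) G)"
proof
  show "ln 2 \<le> s \<longrightarrow> (\<exists>!\<xi>. \<xi> \<in> {1..exp 1} \<and> \<xi> * (2 - ln \<xi>) = exp s)"
    using xi_equation_ex1 assms(2) by blast
  show "\<exists>G. bidding_profile (rho_s s) (chi_s s) G"
    using bidding_profile_small_s bidding_profile_large_s assms by (cases "s \<le> ln 2") auto
qed

end
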